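(* Let $Y$ be a first-countable topological space such that $\mathrm{H}_1([0,1],Y)\subseteq \mathrm{B}_1([0,1],Y)$. Then $Y$ is almost arcwise connected and locally almost arcwise connected.
   Context: $\mathrm{H}_1(X,Y)$: mappings $f:X\to Y$ with $f^{-1}(V)$ an $F_\sigma$-set for every open $V\subseteq Y$. $\mathrm{B}_1(X,Y)$: pointwise limits of sequences of continuous mappings $X\to Y$. Two sets $A,B$ are joined by an arc in a set $S$ if there is a continuous $\gamma:[0,1]\to Y$ with $\gamma([0,1])\subseteq S$, $\gamma(0)\in A$, $\gamma(1)\in B$. $Y$ is almost arcwise connected if each pair of nonempty open subsets of $Y$ can be joined by an arc in $Y$. $Y$ is locally almost arcwise connected at $y$ if for every neighborhood $V$ of $y$ there is a neighborhood $U\subseteq V$ of $y$ such that each pair of nonempty open subsets of $U$ can be joined by an arc in $\overline V$; locally almost arcwise connected means this holds at every point. *)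

theory Defs
  imports "HOL-Analysis.Analysis"
begin

text \<open>Maps from [0,1] to Y are represented by functions real => 'a; only their values
on {0..1} matter.\<close>

definition H1_on01 :: "(real \<Rightarrow> 'a::topological_space) \<Rightarrow> bool" where
  "H1_on01 f \<longleftrightarrow>
     (\<forall>V. open V \<longrightarrow> fsigma_in (top_of_set {0..1}) ({0..1} \<inter> f -` V))"

definition B1_on01 :: "(real \<Rightarrow> 'a::topological_space) \<Rightarrow> bool" where
  "B1_on01 f \<longleftrightarrow>
     (\<exists>g :: nat \<Rightarrow> real \<Rightarrow> 'a. (\<forall>n. continuous_on {0..1} (g n)) \<and>
        (\<forall>x\<in>{0..1}. (\<lambda>n. g n x) \<longlonglongrightarrow> f x))"

definition joined_by_arc_in :: "'a::topological_space set \<Rightarrow> 'a set \<Rightarrow> 'a set \<Rightarrow> bool" where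
  "joined_by_arc_in A B S \<longleftrightarrow>
     (\<exists>\<gamma>. path \<gamma> \<and> path_image \<gamma> \<subseteq> S \<and> pathstart \<gamma> \<in> A \<and> pathfinish \<gamma> \<in> B)"

definition almost_arcwise_connected :: "'a::topological_space itself \<Rightarrow> bool" where
  "almost_arcwise_connected _ \<longleftrightarrow>
     (\<forall>A B :: 'a set. open A \<and> open B \<and> A \<noteq> {} \<and> B \<noteq> {} \<longrightarrow>
        joined_by_arc_in A B UNIV)"

definition locally_almost_arcwise_connected_at :: "'a::topological_space \<Rightarrow> bool" where
  "locally_almost_arcwise_connected_at y \<longleftrightarrow>
     (\<forall>V. open V \<and> y \<in> V \<longrightarrow>
        (\<exists>U. open U \<and> y \<in> U \<and> U \<subseteq> V \<and>
           (\<forall>A B. open A \<and> open B \<and> A \<subseteq> U \<and> B \<subseteq> U \<and> A \<noteq> {} \<and> B \<noteq> {} \<longrightarrow>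
              joined_by_arc_in A B (closure V))))"

definition locally_almost_arcwise_connected :: "'a::topological_space itself \<Rightarrow> bool" where
  "locally_almost_arcwise_connected _ \<longleftrightarrow>
     (\<forall>y::'a. locally_almost_arcwise_connected_at y)"

end

theory Submission
  imports Defs
begin

text \<open>For two nonempty open sets A \<ni> a and B \<ni> b, the step function equal to a on [0,1) and
  to b at 1 is in H1; a continuous g with g 0 \<in> A and g 1 \<in> B among its approximants is the arc.

  If Y is not locally almost arcwise connected at y, first countability yields open A i, B i
  containing points a i, b i converging to y, such that A i and B i are never joined in the closure
  of a fixed neighbourhood V of y. The function that is a m at the dyadics (4k+1)/2^m, b m at
  (4k+3)/2^m and y elsewhere is in H1, because a m and b m converge to y. If continuous g n
  converge to it pointwise, the closed sets {x. \<forall>n\<ge>N. g n x \<in> closure V} cover [0,1], so by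
  Baire one of them contains an interval. That interval contains dyadics of both kinds of a
  common level m, and for large n the map g n on the segment between them joins A m to B m
  inside closure V.\<close>

lemma fsigma_in_countable:
  fixes T :: "'a::t1_space set"
  assumes "countable T" "T \<subseteq> S"
  shows "fsigma_in (top_of_set S) T"
proof -
  have "fsigma_in (top_of_set S) (\<Union>x\<in>T. {x})"
  proof (rule fsigma_in_Union)
    fix C assume "C \<in> (\<lambda>x. {x}) ` T"
    then obtain x where "C = {x}" "x \<in> S" using assms(2) by auto
    then show "fsigma_in (top_of_set S) C"
      by (metis closed_imp_fsigma_in closed_singleton closedin_closed_Int inf.absorb2 empty_subsetI insert_subset)
  qed (use assms(1) in simp)
  then show ?thesis by simp
qed

lemma fsigma_in_cofinite:
  fixes S :: "'a::metric_space set"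
  assumes "finite F"
  shows "fsigma_in (top_of_set S) (S - F)"
proof (rule open_imp_fsigma_in)
  show "metrizable_space (top_of_set S)"
    by (rule metrizable_space_subtopology[OF metrizable_space_euclidean])
  show "openin (top_of_set S) (S - F)"
    using assms by (simp add: Diff_eq openin_open_Int open_Compl finite_imp_closed)
qed

lemma H1_on01I:
  assumes "\<And>W. open W \<Longrightarrow> countable ({0..1} \<inter> f -` W) \<or> finite ({0..1} - f -` W)"
  shows "H1_on01 f"
  unfolding H1_on01_def
proof (intro allI impI)
  fix W :: "'a set" assume "open W"
  have "{0..1} \<inter> f -` W = {0..1} - ({0..1} - f -` W)" by blast
  then show "fsigma_in (top_of_set {0..1}) ({0..1} \<inter> f -` W)"
    using assms[OF \<open>open W\<close>] fsigma_in_countable fsigma_in_cofinite by (metis inf_le1)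
qed

lemma joined_by_arc_inI:
  fixes g :: "'b::real_normed_vector \<Rightarrow> 'a::topological_space"
  assumes "continuous_on (closed_segment p q) g" "g p \<in> A" "g q \<in> B"
    and "g ` closed_segment p q \<subseteq> S"
  shows "joined_by_arc_in A B S"
  unfolding joined_by_arc_in_def
proof (intro exI conjI)
  show "path (g \<circ> linepath p q)"
    using assms(1) by (intro path_continuous_image) simp_all
qed (use assms in \<open>simp_all add: path_image_compose pathstart_compose pathfinish_compose\<close>)

lemma almost_arcwise_connected_if_H1_imp_B1:
  assumes "\<forall>f :: real \<Rightarrow> 'a::topological_space. H1_on01 f \<longrightarrow> B1_on01 f"
  shows "almost_arcwise_connected TYPE('a)"
  unfolding almost_arcwise_connected_def
proof (intro allI impI)
  fix A B :: "'a set" assume "open A \<and> open B \<and> A \<noteq> {} \<and> B \<noteq> {}"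
  then obtain a b where ab: "a \<in> A" "b \<in> B" "open A" "open B" by auto
  define f where "f x = (if x = 1 then b else a)" for x :: real
  have "H1_on01 f"
  proof (rule H1_on01I)
    fix W :: "'a set"
    have "{0..1} \<inter> f -` W \<subseteq> {1} \<or> {0..1} - f -` W \<subseteq> {1}"
      by (auto simp: f_def)
    then show "countable ({0..1} \<inter> f -` W) \<or> finite ({0..1} - f -` W)"
      by (meson countable_finite finite.emptyI finite_insert finite_subset)
  qed
  then obtain g where g: "\<And>n. continuous_on {0..1} (g n)" "\<And>x. x \<in> {0..1} \<Longrightarrow> (\<lambda>n. g n x) \<longlonglongrightarrow> f x"
    using assms unfolding B1_on01_def by blast
  have "eventually (\<lambda>n. g n 0 \<in> A) sequentially" "eventually (\<lambda>n. g n 1 \<in> B) sequentially"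
    using g(2)[of 0] g(2)[of 1] ab by (auto simp: f_def intro: topological_tendstoD)
  then obtain n where "g n 0 \<in> A" "g n 1 \<in> B"
    using eventually_conj eventually_happens' trivial_limit_sequentially by blast
  then show "joined_by_arc_in A B UNIV"
    using g(1)[of n] by (intro joined_by_arc_inI[of 0 1]) (simp_all add: closed_segment_eq_real_ivl)
qed

definition dyadics :: "real set" where
  "dyadics = {x. \<exists>m::nat. x * 2^m \<in> \<int>}"

definition dyadic_level :: "real \<Rightarrow> nat" where
  "dyadic_level x = (LEAST m. x * 2^m \<in> \<int>)"

lemma dyadic_level_odd:
  assumes "odd r"
  shows "of_int r / 2^m \<in> dyadics" "dyadic_level (of_int r / 2^m) = m"
proof -
  have scaled: "(of_int r :: real) / 2^m * 2^m \<in> \<int>" by simp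
  have not_scaled: "\<not> of_int r / 2^m * (2::real)^k \<in> \<int>" if "k < m" for k
  proof
    assume "of_int r / 2^m * (2::real)^k \<in> \<int>"
    then obtain z where z: "of_int r / 2^m * (2::real)^k = of_int z" by (auto elim: Ints_cases)
    have "(2::real)^m = 2^k * 2^(m-k)" using that by (simp flip: power_add)
    then have "of_int r = of_int z * (2::real)^(m-k)" using z by (simp add: field_simps)
    then have "r = z * 2^(m-k)" by (metis of_int_eq_iff of_int_mult of_int_power of_int_numeral)
    then show False using assms \<open>k < m\<close> by simp
  qed
  show "of_int r / 2^m \<in> dyadics" unfolding dyadics_def using scaled by blast
  show "dyadic_level (of_int r / 2^m) = m" unfolding dyadic_level_def
    by (rule Least_equality) (use scaled not_scaled in \<open>auto simp: not_less[symmetric]\<close>)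
qed

lemma dyadic_scaled_Ints:
  assumes "x \<in> dyadics" "dyadic_level x \<le> k"
  shows "x * 2^k \<in> \<int>"
proof -
  let ?l = "dyadic_level x"
  have "x * 2^?l \<in> \<int>"
    using assms(1) unfolding dyadics_def dyadic_level_def by (auto intro: LeastI_ex)
  moreover have "x * (2::real)^k = x * 2^?l * 2^(k - ?l)"
    using assms(2) by (metis le_add_diff_inverse mult.assoc power_add)
  ultimately show ?thesis by (metis Ints_mult Ints_power Ints_numeral)
qed

lemma countable_dyadics: "countable dyadics"
proof -
  have "dyadics \<subseteq> (\<lambda>(m::nat, z::int). of_int z / 2^m) ` UNIV"
  proof
    fix x assume "x \<in> dyadics"
    then obtain m z where "x * 2^m = of_int z" unfolding dyadics_def by (auto elim: Ints_cases)
    then have "x = of_int z / 2^m" by (simp add: field_simps)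
    then show "x \<in> (\<lambda>(m::nat, z::int). of_int z / 2^m) ` UNIV" by auto
  qed
  then show ?thesis by (rule countable_subset) simp
qed

lemma finite_scaled_Ints_in_interval: "finite {x \<in> {a..b::real}. x * 2^k \<in> \<int>}"
proof -
  have "{x \<in> {a..b}. x * 2^k \<in> \<int>} \<subseteq> (\<lambda>z. of_int z / 2^k) ` {\<lceil>a * 2^k\<rceil>..\<lfloor>b * 2^k\<rfloor>}"
  proof
    fix x assume x: "x \<in> {x \<in> {a..b}. x * 2^k \<in> \<int>}"
    then obtain z where z: "x * 2^k = of_int z" by (auto elim: Ints_cases)
    have "a * 2^k \<le> x * 2^k" "x * 2^k \<le> b * 2^k" using x by auto
    then have "z \<in> {\<lceil>a * 2^k\<rceil>..\<lfloor>b * 2^k\<rfloor>}" using z by (simp add: ceiling_le le_floor_iff)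
    moreover have "x = of_int z / 2^k" using z by (simp add: field_simps)
    ultimately show "x \<in> (\<lambda>z. of_int z / 2^k) ` {\<lceil>a * 2^k\<rceil>..\<lfloor>b * 2^k\<rfloor>}" by blast
  qed
  then show ?thesis by (rule finite_subset) simp
qed

lemma dyadics_mod_4_in_interval:
  fixes a b :: real
  assumes "a < b"
  obtains r s m where "r mod 4 = 1" "s mod 4 = 3"
    "of_int r / 2^m \<in> {a..b}" "of_int s / 2^m \<in> {a..b}"
proof -
  obtain m where "4 / (b - a) < (2::real)^m" using real_arch_pow[of 2 "4 / (b - a)"] by auto
  then have m: "4 < 2^m * (b - a)" using assms by (simp add: divide_less_eq mult.commute)
  define j where "j = \<lceil>a * 2^m\<rceil>"
  have j: "a * 2^m \<le> of_int j" "of_int j < a * 2^m + 1" unfolding j_def by linarith+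
  have mem: "of_int t / 2^m \<in> {a..b}" if "j \<le> t" "t \<le> j + 3" for t
  proof -
    have "real_of_int j \<le> of_int t" "real_of_int t \<le> of_int j + 3" using that by linarith+
    then have "a * 2^m \<le> of_int t" "of_int t \<le> b * 2^m"
      using j m by (auto simp: algebra_simps)
    then show ?thesis by (simp add: pos_le_divide_eq pos_divide_le_eq)
  qed
  have "(j + (1 - j) mod 4) mod 4 = 1" "(j + (3 - j) mod 4) mod 4 = 3" by presburger+
  moreover have "j \<le> j + (t - j) mod 4 \<and> j + (t - j) mod 4 \<le> j + 3" for t by simp
  ultimately show thesis using that mem by blast
qed

text \<open>Writing a dyadic x as r / 2^m with r odd (or m = 0), the comb takes the value a m
  where r = 1 mod 4, b m where r = 3 mod 4, and y everywhere else.\<close>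

definition dyadic_comb :: "(nat \<Rightarrow> 'a) \<Rightarrow> (nat \<Rightarrow> 'a) \<Rightarrow> 'a \<Rightarrow> real \<Rightarrow> 'a" where
  "dyadic_comb a b y x =
     (if x \<in> dyadics \<and> \<lfloor>x * 2 ^ dyadic_level x\<rfloor> mod 4 = 1 then a (dyadic_level x)
      else if x \<in> dyadics \<and> \<lfloor>x * 2 ^ dyadic_level x\<rfloor> mod 4 = 3 then b (dyadic_level x)
      else y)"

lemma dyadic_comb_mod_4_eq_1:
  assumes "r mod 4 = 1"
  shows "dyadic_comb a b y (of_int r / 2^m) = a m"
proof -
  have "odd r" using assms by presburger
  then show ?thesis using dyadic_level_odd[of r m] assms by (simp add: dyadic_comb_def)
qed

lemma dyadic_comb_mod_4_eq_3:
  assumes "s mod 4 = 3"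
  shows "dyadic_comb a b y (of_int s / 2^m) = b m"
proof -
  have "odd s" using assms by presburger
  then show ?thesis using dyadic_level_odd[of s m] assms by (simp add: dyadic_comb_def)
qed

lemma dyadic_comb_not_dyadic: "x \<notin> dyadics \<Longrightarrow> dyadic_comb a b y x = y"
  by (simp add: dyadic_comb_def)

lemma dyadic_comb_cases: "dyadic_comb a b y x \<in> {y, a (dyadic_level x), b (dyadic_level x)}"
  by (simp add: dyadic_comb_def)

lemma H1_on01_dyadic_comb:
  fixes y :: "'a::topological_space"
  assumes "a \<longlonglongrightarrow> y" "b \<longlonglongrightarrow> y"
  shows "H1_on01 (dyadic_comb a b y)"
proof (rule H1_on01I)
  fix W :: "'a set" assume "open W"
  show "countable ({0..1} \<inter> dyadic_comb a b y -` W) \<or> finite ({0..1} - dyadic_comb a b y -` W)"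
  proof (cases "y \<in> W")
    case False
    then have "x \<in> dyadics" if "dyadic_comb a b y x \<in> W" for x
      using that dyadic_comb_not_dyadic by metis
    then have "{0..1} \<inter> dyadic_comb a b y -` W \<subseteq> dyadics" by auto
    then show ?thesis using countable_subset[OF _ countable_dyadics] by blast
  next
    case True
    have "eventually (\<lambda>i. a i \<in> W \<and> b i \<in> W) sequentially"
      using assms \<open>open W\<close> True by (intro eventually_conj topological_tendstoD)
    then obtain K where K: "\<And>i. i > K \<Longrightarrow> a i \<in> W \<and> b i \<in> W"
      unfolding eventually_sequentially by (meson less_imp_le)
    have "x * 2^K \<in> \<int>" if "dyadic_comb a b y x \<notin> W" for x
    proof -
      have "x \<in> dyadics" using that True dyadic_comb_not_dyadic by metis
      moreover have "\<not> dyadic_level x > K"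
        using that K[of "dyadic_level x"] True dyadic_comb_cases[of a b y x] by auto
      ultimately show ?thesis by (simp add: dyadic_scaled_Ints)
    qed
    then have "{0..1} - dyadic_comb a b y -` W \<subseteq> {x \<in> {0..1}. x * 2^K \<in> \<int>}" by auto
    then show ?thesis using finite_subset[OF _ finite_scaled_Ints_in_interval] by blast
  qed
qed

lemma closed_cover_contains_subinterval:
  fixes E :: "nat \<Rightarrow> real set"
  assumes "a < b" "\<And>n. closed (E n)" "{a..b} \<subseteq> (\<Union>n. E n)"
  obtains c d n where "c < d" "{c..d} \<subseteq> {a..b} \<inter> E n"
proof -
  have "\<exists>n. \<not> {a..b} \<subseteq> closure ({a..b} - E n)"
  proof (rule ccontr)
    assume "\<nexists>n. \<not> {a..b} \<subseteq> closure ({a..b} - E n)"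
    then have "{a..b} \<subseteq> closure (\<Inter> (range (\<lambda>n. {a..b} - E n)))"
      using assms(2) by (intro Baire) (auto simp: Diff_eq intro!: openin_open_Int open_Compl)
    moreover have "\<Inter> (range (\<lambda>n. {a..b} - E n)) = {}" using assms(3) by auto
    ultimately have "{a..b} \<subseteq> {}" by (metis closure_empty)
    then show False using assms(1) by simp
  qed
  then obtain n x0 where x0: "x0 \<in> {a..b}" "x0 \<notin> closure ({a..b} - E n)" by blast
  then obtain e where "e > 0" and e: "\<And>z. z \<in> {a..b} - E n \<Longrightarrow> \<not> dist z x0 < e"
    unfolding closure_approachable by blast
  define \<delta> where "\<delta> = min (e/2) ((b - a)/2)"
  define c where "c = (if x0 \<le> (a + b)/2 then x0 else x0 - \<delta>)"
  have "\<delta> > 0" "\<delta> \<le> e/2" "\<delta> \<le> (b - a)/2" using \<open>e > 0\<close> assms(1) by (simp_all add: \<delta>_def min_def)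
  moreover have "{c..c + \<delta>} \<subseteq> {a..b} \<inter> E n"
  proof
    fix z assume "z \<in> {c..c + \<delta>}"
    then have "z \<in> {a..b}" "dist z x0 < e"
      using x0(1) \<open>\<delta> \<le> e/2\<close> \<open>\<delta> \<le> (b - a)/2\<close> \<open>e > 0\<close>
      by (auto simp: c_def dist_real_def split: if_splits)
    then show "z \<in> {a..b} \<inter> E n" using e by blast
  qed
  ultimately show thesis using that[of c "c + \<delta>" n] by simp
qed

lemma continuous_limit_eventually_in_closure_on_subinterval:
  fixes g :: "nat \<Rightarrow> real \<Rightarrow> 'a::topological_space"
  assumes "a < b" "\<And>n. continuous_on {a..b} (g n)"
    and "\<And>x. x \<in> {a..b} \<Longrightarrow> (\<lambda>n. g n x) \<longlonglongrightarrow> f x"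
    and "open V" "f ` {a..b} \<subseteq> V"
  obtains c d N where "c < d" "{c..d} \<subseteq> {a..b}"
    "\<And>n x. n \<ge> N \<Longrightarrow> x \<in> {c..d} \<Longrightarrow> g n x \<in> closure V"
proof -
  define E where "E N = {x \<in> {a..b}. \<forall>n\<ge>N. g n x \<in> closure V}" for N
  have "closed (E N)" for N
  proof -
    have "E N = {a..b} \<inter> (\<Inter>n\<in>{N..}. {a..b} \<inter> g n -` closure V)" by (auto simp: E_def)
    moreover have "closed ({a..b} \<inter> g n -` closure V)" for n
      using assms(2) by (rule continuous_closed_preimage) auto
    ultimately show ?thesis by (metis closed_Int closed_INT closed_atLeastAtMost)
  qed
  moreover have "{a..b} \<subseteq> (\<Union>N. E N)"
  proof
    fix x assume x: "x \<in> {a..b}"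
    then have "eventually (\<lambda>n. g n x \<in> V) sequentially"
      using assms(3-5) by (intro topological_tendstoD) auto
    then obtain N where "\<And>n. n \<ge> N \<Longrightarrow> g n x \<in> V" by (auto simp: eventually_sequentially)
    then show "x \<in> (\<Union>N. E N)" using x closure_subset unfolding E_def by blast
  qed
  ultimately obtain c d N where "c < d" "{c..d} \<subseteq> {a..b} \<inter> E N"
    using closed_cover_contains_subinterval[OF assms(1)] by metis
  then show thesis by (intro that[of c d N]) (auto simp: E_def)
qed

lemma B1_on01_dyadic_comb_joins:
  fixes y :: "'a::topological_space"
  assumes "B1_on01 (dyadic_comb a b y)" "open V" "y \<in> V"
    and "\<And>i. open (A i)" "\<And>i. open (B i)" "\<And>i. a i \<in> A i \<inter> V" "\<And>i. b i \<in> B i \<inter> V"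
  shows "\<exists>m. joined_by_arc_in (A m) (B m) (closure V)"
proof -
  let ?f = "dyadic_comb a b y"
  obtain g where g: "\<And>n. continuous_on {0..1} (g n)"
    "\<And>x. x \<in> {0..1} \<Longrightarrow> (\<lambda>n. g n x) \<longlonglongrightarrow> ?f x"
    using assms(1) unfolding B1_on01_def by blast
  have "?f x \<in> V" for x using assms(3,6,7) dyadic_comb_cases[of a b y x] by auto
  then have "?f ` {0..1} \<subseteq> V" by auto
  obtain c d N where "c < d" "{c..d} \<subseteq> {0..1}"
    and N: "\<And>n x. n \<ge> N \<Longrightarrow> x \<in> {c..d} \<Longrightarrow> g n x \<in> closure V"
    using continuous_limit_eventually_in_closure_on_subinterval[OF zero_less_one g(1) g(2) assms(2)
        \<open>?f ` {0..1} \<subseteq> V\<close>] by blast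
  obtain r s m where "r mod 4 = 1" "s mod 4 = 3"
    and pq: "of_int r / 2^m \<in> {c..d}" "of_int s / 2^m \<in> {c..d}"
    by (rule dyadics_mod_4_in_interval[OF \<open>c < d\<close>])
  define p where "p = (of_int r / 2^m :: real)"
  define q where "q = (of_int s / 2^m :: real)"
  have "?f p = a m" "?f q = b m"
    unfolding p_def q_def using \<open>r mod 4 = 1\<close> \<open>s mod 4 = 3\<close>
    by (simp_all add: dyadic_comb_mod_4_eq_1 dyadic_comb_mod_4_eq_3)
  moreover have "p \<in> {0..1}" "q \<in> {0..1}"
    using pq \<open>{c..d} \<subseteq> {0..1}\<close> unfolding p_def q_def by blast+
  ultimately have "eventually (\<lambda>n. g n p \<in> A m \<and> g n q \<in> B m \<and> n \<ge> N) sequentially"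
    using g(2) assms(4-7)
    by (intro eventually_conj topological_tendstoD eventually_ge_at_top) auto
  then obtain n where n: "g n p \<in> A m" "g n q \<in> B m" "n \<ge> N"
    using eventually_happens' trivial_limit_sequentially by blast
  have "closed_segment p q \<subseteq> {c..d}"
    using pq by (simp add: p_def q_def closed_segment_subset)
  then have "joined_by_arc_in (A m) (B m) (closure V)"
    using n N \<open>{c..d} \<subseteq> {0..1}\<close>
    by (intro joined_by_arc_inI[of p q "g n"] continuous_on_subset[OF g(1)]) auto
  then show ?thesis by blast
qed

lemma not_locally_almost_arcwise_connected_at_sequences:
  fixes y :: "'a::first_countable_topology"
  assumes "\<not> locally_almost_arcwise_connected_at y"
  obtains V A B a b where "open V" "y \<in> V" "\<And>i. open (A i)" "\<And>i. open (B i)"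
    "\<And>i. a i \<in> A i \<inter> V" "\<And>i. b i \<in> B i \<inter> V" "a \<longlonglongrightarrow> y" "b \<longlonglongrightarrow> y"
    "\<And>i. \<not> joined_by_arc_in (A i) (B i) (closure V)"
proof -
  obtain V where V: "open V" "y \<in> V"
    and bad: "\<And>U. open U \<Longrightarrow> y \<in> U \<Longrightarrow> U \<subseteq> V \<Longrightarrow> \<exists>A B. open A \<and> open B \<and> A \<subseteq> U \<and> B \<subseteq> U
        \<and> A \<noteq> {} \<and> B \<noteq> {} \<and> \<not> joined_by_arc_in A B (closure V)"
    using assms unfolding locally_almost_arcwise_connected_at_def by (metis (no_types))
  obtain U where U: "\<And>i. open (U i)" "\<And>i. y \<in> U i"
    "\<And>S. open S \<Longrightarrow> y \<in> S \<Longrightarrow> eventually (\<lambda>i. U i \<subseteq> S) sequentially"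
    by (rule countable_basis_at_decseq[of y]) blast+
  have "\<forall>i. \<exists>A B a b. open A \<and> open B \<and> a \<in> A \<and> b \<in> B \<and> A \<subseteq> U i \<inter> V \<and> B \<subseteq> U i \<inter> V
      \<and> \<not> joined_by_arc_in A B (closure V)"
  proof
    fix i
    have "open (U i \<inter> V)" "y \<in> U i \<inter> V" using U(1,2) V by auto
    then obtain A B where "open A" "open B" "A \<subseteq> U i \<inter> V" "B \<subseteq> U i \<inter> V" "A \<noteq> {}" "B \<noteq> {}"
      "\<not> joined_by_arc_in A B (closure V)"
      using bad[of "U i \<inter> V"] by blast
    then show "\<exists>A B a b. open A \<and> open B \<and> a \<in> A \<and> b \<in> B \<and> A \<subseteq> U i \<inter> V
      \<and> B \<subseteq> U i \<inter> V \<and> \<not> joined_by_arc_in A B (closure V)" by blast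
  qed
  then obtain A B a b where AB: "\<And>i. open (A i) \<and> open (B i) \<and> a i \<in> A i \<and> b i \<in> B i
      \<and> A i \<subseteq> U i \<inter> V \<and> B i \<subseteq> U i \<inter> V \<and> \<not> joined_by_arc_in (A i) (B i) (closure V)"
    unfolding choice_iff by blast
  have tendsto_y: "c \<longlonglongrightarrow> y" if "\<And>i. c i \<in> U i" for c :: "nat \<Rightarrow> 'a"
  proof (rule topological_tendstoI)
    fix S assume "open S" "y \<in> S"
    show "eventually (\<lambda>i. c i \<in> S) sequentially"
      using U(3)[OF \<open>open S\<close> \<open>y \<in> S\<close>] by (rule eventually_mono) (use that in blast)
  qed
  have "open (A i)" "open (B i)" "a i \<in> A i \<inter> V" "b i \<in> B i \<inter> V"
    "\<not> joined_by_arc_in (A i) (B i) (closure V)" "a i \<in> U i" "b i \<in> U i" for i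
    using AB[of i] by auto
  then show thesis
    using that[OF V] tendsto_y[of a] tendsto_y[of b] by meson
qed

theorem mainTheorem11:
  assumes "\<forall>f :: real \<Rightarrow> 'a::first_countable_topology. H1_on01 f \<longrightarrow> B1_on01 f"
  shows "almost_arcwise_connected TYPE('a) \<and> locally_almost_arcwise_connected TYPE('a)"
proof
  show "almost_arcwise_connected TYPE('a)"
    using assms by (rule almost_arcwise_connected_if_H1_imp_B1)
  show "locally_almost_arcwise_connected TYPE('a)"
    unfolding locally_almost_arcwise_connected_def
  proof (rule allI, rule ccontr)
    fix y :: 'a
    assume "\<not> locally_almost_arcwise_connected_at y"
    then obtain V A B a b where V: "open V" "y \<in> V" and AB: "\<And>i. open (A i)" "\<And>i. open (B i)"
      and ab: "\<And>i. a i \<in> A i \<inter> V" "\<And>i. b i \<in> B i \<inter> V" and lim: "a \<longlonglongrightarrow> y" "b \<longlonglongrightarrow> y"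
      and not_joined: "\<And>i. \<not> joined_by_arc_in (A i) (B i) (closure V)"
      by (rule not_locally_almost_arcwise_connected_at_sequences) blast
    have "B1_on01 (dyadic_comb a b y)"
      using assms H1_on01_dyadic_comb[OF lim] by blast
    then obtain m where "joined_by_arc_in (A m) (B m) (closure V)"
      using B1_on01_dyadic_comb_joins[of a b y V A B] V AB ab by blast
    then show False using not_joined by blast
  qed
qed

end
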